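(* Let $\mathbf{x}=(x_1,\ldots,x_{n_1+n_2})$ be a random vector with a multivariate normal density $f$, and write $\mathbf{x}=(\mathbf{x}^{(1)},\mathbf{x}^{(2)})$ with $\mathbf{x}^{(1)}=(x_1,\ldots,x_{n_1})$ and $\mathbf{x}^{(2)}=(x_{n_1+1},\ldots,x_{n_1+n_2})$. For $k\in\{1,2\}$ let $\widehat{f}_k(\mathbf{x})=\prod_{i=1}^{n_1+n_2} f(x_i\mid \mathbf{x}_{g_k(i)})$ be a Vecchia approximation with conditioning index sets $g_k(i)\subset\{1,\ldots,i-1\}$. 1. If $g_1(i)\subset g_2(i)$ for all $i=1,\ldots,n_1+n_2$, then $\mathrm{KL}\big(f(\mathbf{x})\,\|\,\widehat{f}_1(\mathbf{x})\big)\geq \mathrm{KL}\big(f(\mathbf{x})\,\|\,\widehat{f}_2(\mathbf{x})\big)$. 2. If $g_1(i)\subset g_2(i)$ for all $i=n_1+1,\ldots,n_1+n_2$, then $\mathrm{CKL}\big(f(\mathbf{x}^{(2)}\mid\mathbf{x}^{(1)})\,\|\,\widehat{f}_1(\mathbf{x}^{(2)}\mid\mathbf{x}^{(1)})\big)\geq \mathrm{CKL}\big(f(\mathbf{x}^{(2)}\mid\mathbf{x}^{(1)})\,\|\,\widehat{f}_2(\mathbf{x}^{(2)}\mid\mathbf{x}^{(1)})\big)$.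
   Context: Here $f(x_i\mid \mathbf{x}_{g(i)})$ denotes the exact conditional density of $x_i$ given the subvector $\mathbf{x}_{g(i)}=(x_j)_{j\in g(i)}$ under the true joint density $f$ (for $g(i)=\emptyset$ it is the marginal density of $x_i$). Each Vecchia approximation $\widehat{f}_k$ is a valid (multivariate normal) density on $\mathbb{R}^{n_1+n_2}$, and $\widehat{f}_k(\mathbf{x}^{(2)}\mid\mathbf{x}^{(1)})=\widehat{f}_k(\mathbf{x})/\int \widehat{f}_k(\mathbf{x})\,d\mathbf{x}^{(2)}$ is the conditional density it implies. The Kullback–Leibler divergence is $\mathrm{KL}(f(\mathbf{x})\|\widehat{f}(\mathbf{x}))=\int f(\mathbf{x})\log\big(f(\mathbf{x})/\widehat{f}(\mathbf{x})\big)d\mathbf{x}$, and the conditional KL divergence is $\mathrm{CKL}\big(f(\mathbf{y}\mid\mathbf{z})\|\widehat{f}(\mathbf{y}\mid\mathbf{z})\big)=\int f(\mathbf{z})\int f(\mathbf{y}\mid\mathbf{z})\log\big(f(\mathbf{y}\mid\mathbf{z})/\widehat{f}(\mathbf{y}\mid\mathbf{z})\big)\,d\mathbf{y}\,d\mathbf{z}$, i.e., the KL divergence of the conditional distributions averaged over $\mathbf{z}\sim f$. *)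

theory Defs
  imports "HOL-Analysis.Analysis"
begin

text \<open>Vectors in R^n are functions nat => real; only coordinates 0..n-1 matter.
  Indices are 0-based (paper: 1-based).  The Lebesgue measure on R^I is
  the product measure PiM I (\<lambda>_. lborel).\<close>

abbreviation leb :: "nat set \<Rightarrow> (nat \<Rightarrow> real) measure" where
  "leb I \<equiv> PiM I (\<lambda>_. lborel)"

text \<open>Non-degenerate multivariate normal density on R^n, written with mean mu
  and symmetric positive definite precision matrix P (inverse covariance);
  the constant c is the normalising constant.\<close>
definition is_mvn_density :: "nat \<Rightarrow> ((nat \<Rightarrow> real) \<Rightarrow> real) \<Rightarrow> bool" where
  "is_mvn_density n f \<longleftrightarrow>
     (\<exists>(mu :: nat \<Rightarrow> real) (P :: nat \<Rightarrow> nat \<Rightarrow> real) (c :: real).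
        (\<forall>i<n. \<forall>j<n. P i j = P j i) \<and>
        (\<forall>v :: nat \<Rightarrow> real. (\<exists>i<n. v i \<noteq> 0) \<longrightarrow>
             (\<Sum>i<n. \<Sum>j<n. v i * P i j * v j) > 0) \<and>
        c > 0 \<and>
        f = (\<lambda>x. c * exp (- (1/2) * (\<Sum>i<n. \<Sum>j<n. (x i - mu i) * P i j * (x j - mu j)))) \<and>
        (\<integral>x. f x \<partial>leb {..<n}) = 1)"

definition marg :: "nat \<Rightarrow> ((nat \<Rightarrow> real) \<Rightarrow> real) \<Rightarrow> nat set \<Rightarrow> (nat \<Rightarrow> real) \<Rightarrow> real" where
  "marg n f S x = (\<integral>y. f (\<lambda>j. if j \<in> S then x j else y j) \<partial>leb ({..<n} - S))"

text \<open>Exact conditional density f(x_i | x_S) = marginal of S \<union> {i} / marginal of S.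
  For S = {} this is the marginal density of x_i.\<close>
definition cond_dens :: "nat \<Rightarrow> ((nat \<Rightarrow> real) \<Rightarrow> real) \<Rightarrow> nat set \<Rightarrow> nat \<Rightarrow> (nat \<Rightarrow> real) \<Rightarrow> real" where
  "cond_dens n f S i x = marg n f (insert i S) x / marg n f S x"

definition vecchia :: "nat \<Rightarrow> ((nat \<Rightarrow> real) \<Rightarrow> real) \<Rightarrow> (nat \<Rightarrow> nat set) \<Rightarrow> (nat \<Rightarrow> real) \<Rightarrow> real" where
  "vecchia n f g x = (\<Prod>i<n. cond_dens n f (g i) i x)"

definition KL :: "nat \<Rightarrow> ((nat \<Rightarrow> real) \<Rightarrow> real) \<Rightarrow> ((nat \<Rightarrow> real) \<Rightarrow> real) \<Rightarrow> real" where
  "KL n f h = (\<integral>x. f x * ln (f x / h x) \<partial>leb {..<n})"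

definition merge_vec :: "nat \<Rightarrow> (nat \<Rightarrow> real) \<Rightarrow> (nat \<Rightarrow> real) \<Rightarrow> (nat \<Rightarrow> real)" where
  "merge_vec n1 z y = (\<lambda>j. if j < n1 then z j else y j)"

text \<open>Conditional KL divergence of x^(2) = coordinates n1..<n given
  x^(1) = coordinates 0..<n1, for joint densities f (true) and h (approximation);
  conditional densities are joint / marginal of x^(1).\<close>
definition CKL :: "nat \<Rightarrow> nat \<Rightarrow> ((nat \<Rightarrow> real) \<Rightarrow> real) \<Rightarrow> ((nat \<Rightarrow> real) \<Rightarrow> real) \<Rightarrow> real" where
  "CKL n1 n f h =
     (\<integral>z. marg n f {..<n1} z *
        (\<integral>y. (let x = merge_vec n1 z y;
                   p = f x / marg n f {..<n1} x;
                   q = h x / marg n h {..<n1} x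
               in p * ln (p / q)) \<partial>leb {n1..<n})
      \<partial>leb {..<n1})"

end

theory Submission
  imports Defs "HOL-Probability.Distributions"
begin

text \<open>Up to terms that do not depend on the conditioning sets, both divergences equal
  minus the sum over i of E_f ln f(x_i | x_g(i)): over all i for the KL divergence, over the
  second block for the conditional one, where the first n1 factors cancel because they are
  exactly the marginal of the Vecchia density on the first block.  Enlarging a conditioning set
  H to G can only increase E_f ln f(x_i | x_G), by Gibbs' inequality:
  E_f ln (c_G / c_H) \<ge> 1 - E_f (c_H / c_G) = 0, where the last integral is 1 because
  integrating first over the coordinates outside G and i, then over x_i, leaves the marginal of
  the coordinates in G.  The Gaussian assumption only makes every term finite: completing the
  square shows that each marginal of the exponential of a negative definite quadratic polynomial
  is again of that form, so all log-densities are quadratic and integrable against f.\<close>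

section \<open>Exponentials of quadratic polynomials\<close>

definition quad_poly ::
  "nat set \<Rightarrow> (nat \<Rightarrow> nat \<Rightarrow> real) \<Rightarrow> (nat \<Rightarrow> real) \<Rightarrow> real \<Rightarrow> (nat \<Rightarrow> real) \<Rightarrow> real" where
  "quad_poly S A b c x = (\<Sum>i\<in>S. \<Sum>l\<in>S. A i l * x i * x l) + (\<Sum>i\<in>S. b i * x i) + c"

definition neg_definite_on :: "nat set \<Rightarrow> (nat \<Rightarrow> nat \<Rightarrow> real) \<Rightarrow> bool" where
  "neg_definite_on S A \<longleftrightarrow> (\<forall>i\<in>S. \<forall>l\<in>S. A i l = A l i) \<and>
     (\<forall>v. (\<exists>i\<in>S. v i \<noteq> 0) \<longrightarrow> quad_poly S A (\<lambda>_. 0) 0 v < 0)"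

lemma quad_poly_cong: "(\<And>j. j \<in> S \<Longrightarrow> x j = y j) \<Longrightarrow> quad_poly S A b c x = quad_poly S A b c y"
  by (simp add: quad_poly_def)

lemma borel_measurable_quad_poly:
  assumes "\<And>j. j \<in> S \<Longrightarrow> (\<lambda>x. h x j) \<in> borel_measurable M"
  shows "(\<lambda>x. quad_poly S A b c (h x)) \<in> borel_measurable M"
  unfolding quad_poly_def using assms
  by (intro borel_measurable_add borel_measurable_sum borel_measurable_times borel_measurable_const) auto

lemma quad_poly_fun_upd:
  assumes "finite S" "j \<in> S" "\<forall>i\<in>S. \<forall>l\<in>S. A i l = A l i"
  shows "quad_poly S A b c (x(j:=t)) =
    A j j * t\<^sup>2 + (2 * (\<Sum>l\<in>S-{j}. A j l * x l) + b j) * t + quad_poly (S-{j}) A b c x"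
proof -
  have "(\<Sum>i\<in>S-{j}. A i j * x i) = (\<Sum>l\<in>S-{j}. A j l * x l)"
    using assms(2,3) by (intro sum.cong) auto
  then show ?thesis
    using assms(1,2)
    by (simp add: quad_poly_def sum.remove[of S j] sum.distrib flip: sum_distrib_left sum_distrib_right)
      (simp add: power2_eq_square algebra_simps sum_distrib_left)
qed

lemma sum_sum_minus_rank_one:
  fixes a :: real
  shows "(\<Sum>i\<in>S. \<Sum>l\<in>S. (A i l - u i * u l / a) * x i * x l) =
    (\<Sum>i\<in>S. \<Sum>l\<in>S. A i l * x i * x l) - (\<Sum>l\<in>S. u l * x l)\<^sup>2 / a"
  by (simp add: power2_eq_square sum_product sum_subtractf sum_divide_distrib algebra_simps)

lemma sum_sum_diff_symmetric:
  fixes P :: "nat \<Rightarrow> nat \<Rightarrow> real"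
  assumes sym: "\<forall>i<n. \<forall>j<n. P i j = P j i"
  shows "(\<Sum>i<n. \<Sum>j<n. (x i - m i) * P i j * (x j - m j)) =
    (\<Sum>i<n. \<Sum>j<n. x i * P i j * x j) - 2 * (\<Sum>i<n. (\<Sum>j<n. P i j * m j) * x i) +
    (\<Sum>i<n. \<Sum>j<n. m i * P i j * m j)"
proof -
  have "(\<Sum>i<n. \<Sum>j<n. m i * P i j * x j) = (\<Sum>j<n. \<Sum>i<n. x j * P j i * m i)"
    using sym by (subst sum.swap) (auto intro!: sum.cong)
  then have "(\<Sum>i<n. \<Sum>j<n. m i * P i j * x j) = (\<Sum>i<n. (\<Sum>j<n. P i j * m j) * x i)"
    and "(\<Sum>i<n. \<Sum>j<n. x i * P i j * m j) = (\<Sum>i<n. (\<Sum>j<n. P i j * m j) * x i)"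
    by (simp_all add: sum_distrib_left sum_distrib_right mult_ac)
  then show ?thesis
    by (simp add: algebra_simps sum.distrib sum_subtractf)
qed

lemma neg_definite_on_diag:
  assumes fin: "finite S" and j: "j \<in> S" and nd: "neg_definite_on S A"
  shows "A j j < 0"
proof -
  have sym: "\<forall>i\<in>S. \<forall>l\<in>S. A i l = A l i" using nd by (simp add: neg_definite_on_def)
  have "quad_poly S A (\<lambda>_. 0) 0 ((\<lambda>_. 0)(j := 1)) < 0"
    using nd j unfolding neg_definite_on_def by force
  then show ?thesis
    unfolding quad_poly_fun_upd[OF fin j sym] by (simp add: quad_poly_def)
qed

text \<open>Eliminating \<open>x\<^sub>j\<close> from a negative definite form by completing the square
  leaves the Schur complement of the entry \<open>A j j\<close>.\<close>

lemma neg_definite_on_schur_complement: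
  assumes fin: "finite S" and j: "j \<in> S" and nd: "neg_definite_on S A"
  shows "neg_definite_on (S - {j}) (\<lambda>i l. A i l - A j i * A j l / A j j)"
  unfolding neg_definite_on_def
proof (intro conjI allI impI ballI)
  fix i l assume "i \<in> S - {j}" "l \<in> S - {j}"
  then show "A i l - A j i * A j l / A j j = A l i - A j l * A j i / A j j"
    using nd unfolding neg_definite_on_def by auto
next
  fix v :: "nat \<Rightarrow> real" assume "\<exists>i\<in>S - {j}. v i \<noteq> 0"
  define a where "a = A j j"
  define s where "s = (\<Sum>l\<in>S-{j}. A j l * v l)"
  have a: "a < 0" using neg_definite_on_diag[OF fin j nd] by (simp add: a_def)
  have sym: "\<forall>i\<in>S. \<forall>l\<in>S. A i l = A l i" using nd by (simp add: neg_definite_on_def)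
  obtain i where "i \<in> S" "i \<noteq> j" "v i \<noteq> 0" using \<open>\<exists>i\<in>S - {j}. v i \<noteq> 0\<close> by blast
  then have "quad_poly S A (\<lambda>_. 0) 0 (v(j := -s/a)) < 0"
    using nd unfolding neg_definite_on_def by (metis fun_upd_other)
  also have "quad_poly S A (\<lambda>_. 0) 0 (v(j := -s/a)) = - s\<^sup>2/a + (\<Sum>i\<in>S-{j}. \<Sum>l\<in>S-{j}. A i l * v i * v l)"
    using quad_poly_fun_upd[OF fin j sym, of "\<lambda>_. 0" 0 v "-s/a"] a
    by (simp add: a_def s_def quad_poly_def field_simps power2_eq_square)
  finally show "quad_poly (S - {j}) (\<lambda>i l. A i l - A j i * A j l / A j j) (\<lambda>_. 0) 0 v < 0"
    by (simp add: quad_poly_def sum_sum_minus_rank_one a_def s_def)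
qed

lemma nn_integral_exp_quadratic:
  fixes a \<beta> \<gamma> :: real
  assumes "a < 0"
  shows "(\<integral>\<^sup>+t. ennreal (exp (a * t\<^sup>2 + \<beta> * t + \<gamma>)) \<partial>lborel) =
    ennreal (exp (\<gamma> - \<beta>\<^sup>2 / (4 * a)) * sqrt (pi / - a))"
proof -
  define \<sigma> where "\<sigma> = sqrt (- 1 / (2 * a))"
  define \<mu> where "\<mu> = - \<beta> / (2 * a)"
  define K where "K = exp (\<gamma> - \<beta>\<^sup>2 / (4 * a)) * sqrt (pi / - a)"
  have \<sigma>: "\<sigma> > 0" "\<sigma>\<^sup>2 = - 1 / (2 * a)" using assms by (simp_all add: \<sigma>_def)
  have K: "K \<ge> 0"
    using assms unfolding K_def by (intro mult_nonneg_nonneg real_sqrt_ge_zero divide_nonneg_pos) auto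
  have sq: "sqrt (2 * pi * \<sigma>\<^sup>2) = sqrt (pi / - a)"
    unfolding \<sigma>(2) by (simp add: field_simps)
  have "exp (a * t\<^sup>2 + \<beta> * t + \<gamma>) = K * normal_density \<mu> \<sigma> t" for t
  proof -
    have "a * t\<^sup>2 + \<beta> * t + \<gamma> = (\<gamma> - \<beta>\<^sup>2 / (4 * a)) + - (t - \<mu>)\<^sup>2 / (2 * \<sigma>\<^sup>2)"
      using assms unfolding \<sigma>(2) \<mu>_def by (simp add: field_simps power2_eq_square)
    then have "exp (a * t\<^sup>2 + \<beta> * t + \<gamma>) = exp (\<gamma> - \<beta>\<^sup>2 / (4 * a)) * exp (- (t - \<mu>)\<^sup>2 / (2 * \<sigma>\<^sup>2))"
      by (simp only: exp_add)
    then show ?thesis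
      using assms unfolding K_def normal_density_def sq by simp
  qed
  then have "(\<integral>\<^sup>+t. ennreal (exp (a * t\<^sup>2 + \<beta> * t + \<gamma>)) \<partial>lborel) =
      ennreal K * (\<integral>\<^sup>+t. ennreal (normal_density \<mu> \<sigma> t) \<partial>lborel)"
    using K by (simp add: ennreal_mult nn_integral_cmult)
  also have "(\<integral>\<^sup>+t. ennreal (normal_density \<mu> \<sigma> t) \<partial>lborel) = 1"
    using nn_integral_eq_integral[OF integrable_normal_density] \<sigma>(1) by simp
  finally show ?thesis by (simp add: K_def)
qed

lemma nn_integral_exp_quad_poly_fun_upd:
  assumes fin: "finite S" and j: "j \<in> S" and nd: "neg_definite_on S A"
  shows "(\<integral>\<^sup>+t. ennreal (exp (quad_poly S A b c (x(j:=t)))) \<partial>lborel) =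
    ennreal (exp (quad_poly (S - {j}) (\<lambda>i l. A i l - A j i * A j l / A j j)
      (\<lambda>l. b l - b j * A j l / A j j) (c - (b j)\<^sup>2 / (4 * A j j) + ln (sqrt (pi / - A j j))) x))"
proof -
  define a where "a = A j j"
  define s where "s = (\<Sum>l\<in>S-{j}. A j l * x l)"
  have a: "a < 0" using neg_definite_on_diag[OF fin j nd] by (simp add: a_def)
  have sym: "\<forall>i\<in>S. \<forall>l\<in>S. A i l = A l i" using nd by (simp add: neg_definite_on_def)
  have lin: "(\<Sum>l\<in>S-{j}. (b l - b j * A j l / a) * x l) = (\<Sum>l\<in>S-{j}. b l * x l) - b j * s / a"
    by (simp add: s_def algebra_simps sum_subtractf sum_divide_distrib sum_distrib_left)
  have "(\<integral>\<^sup>+t. ennreal (exp (quad_poly S A b c (x(j:=t)))) \<partial>lborel) =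
      (\<integral>\<^sup>+t. ennreal (exp (a * t\<^sup>2 + (2 * s + b j) * t + quad_poly (S-{j}) A b c x)) \<partial>lborel)"
    by (simp add: quad_poly_fun_upd[OF fin j sym] a_def s_def)
  also have "\<dots> = ennreal (exp (quad_poly (S-{j}) A b c x - (2 * s + b j)\<^sup>2 / (4 * a)) * sqrt (pi / - a))"
    by (rule nn_integral_exp_quadratic[OF a])
  also have "exp (quad_poly (S-{j}) A b c x - (2 * s + b j)\<^sup>2 / (4 * a)) * sqrt (pi / - a) =
      exp (quad_poly (S-{j}) A b c x - (2 * s + b j)\<^sup>2 / (4 * a) + ln (sqrt (pi / - a)))"
  proof -
    have "sqrt (pi / - a) > 0" using a by (intro real_sqrt_gt_zero divide_pos_pos) auto
    then show ?thesis by (simp only: exp_add exp_ln)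
  qed
  also have "quad_poly (S-{j}) A b c x - (2 * s + b j)\<^sup>2 / (4 * a) + ln (sqrt (pi / - a)) =
      quad_poly (S - {j}) (\<lambda>i l. A i l - A j i * A j l / a) (\<lambda>l. b l - b j * A j l / a)
        (c - (b j)\<^sup>2 / (4 * a) + ln (sqrt (pi / - a))) x"
    using a
    by (simp add: quad_poly_def sum_sum_minus_rank_one lin s_def[symmetric])
      (simp add: field_simps power2_eq_square)
  finally show ?thesis by (simp only: a_def)
qed

interpretation lborel_prod: product_sigma_finite "\<lambda>_::nat. lborel :: real measure"
  by unfold_locales

lemma borel_measurable_component_leb:
  "j \<in> U \<Longrightarrow> (\<lambda>y::nat \<Rightarrow> real. y j) \<in> borel_measurable (leb U)"
  using measurable_component_singleton[of j U "\<lambda>_. lborel"] by simp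

lemma borel_measurable_override_on_leb:
  shows "(j \<in> T \<Longrightarrow> j \<in> U) \<Longrightarrow> (\<lambda>y. override_on x y T j) \<in> borel_measurable (leb U)"
    and "(j \<notin> S \<Longrightarrow> j \<in> U) \<Longrightarrow> (\<lambda>y. override_on y x S j) \<in> borel_measurable (leb U)"
  by (cases "j \<in> T"; simp add: borel_measurable_component_leb)
    (cases "j \<in> S"; simp add: borel_measurable_component_leb)

lemma borel_measurable_fun_upd_apply: "(\<lambda>t::real. (x(i := t)) j) \<in> borel_measurable lborel"
  by (cases "j = i") auto

lemma nn_integral_exp_quad_poly_override_on:
  assumes "finite S" "T \<subseteq> S" "neg_definite_on S A"
  shows "\<exists>A' b' c'. neg_definite_on (S - T) A' \<and>
    (\<forall>x. (\<integral>\<^sup>+y. ennreal (exp (quad_poly S A b c (override_on x y T))) \<partial>leb T) =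
          ennreal (exp (quad_poly (S - T) A' b' c' x)))"
proof -
  have "finite T" using assms finite_subset by blast
  then show ?thesis
    using assms
  proof (induction T arbitrary: S A b c rule: finite_induct)
    case empty
    then show ?case by (auto simp: nn_integral_const space_PiM_empty)
  next
    case (insert k T)
    have k: "k \<in> S" and T: "T \<subseteq> S - {k}" using insert.prems insert.hyps by auto
    obtain A1 b1 c1 where
      int_k: "\<And>z. (\<integral>\<^sup>+t. ennreal (exp (quad_poly S A b c (z(k:=t)))) \<partial>lborel) =
        ennreal (exp (quad_poly (S - {k}) A1 b1 c1 z))" and nd1: "neg_definite_on (S - {k}) A1"
      using nn_integral_exp_quad_poly_fun_upd[OF insert.prems(1) k insert.prems(3)]
        neg_definite_on_schur_complement[OF insert.prems(1) k insert.prems(3)] by blast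
    obtain A2 b2 c2 where nd2: "neg_definite_on (S - {k} - T) A2" and
      int_T: "\<And>x. (\<integral>\<^sup>+y. ennreal (exp (quad_poly (S - {k}) A1 b1 c1 (override_on x y T))) \<partial>leb T) =
        ennreal (exp (quad_poly (S - {k} - T) A2 b2 c2 x))"
      using insert.IH[OF _ T nd1] insert.prems(1) by blast
    have "(\<integral>\<^sup>+y. ennreal (exp (quad_poly S A b c (override_on x y (insert k T)))) \<partial>leb (insert k T)) =
      ennreal (exp (quad_poly (S - {k} - T) A2 b2 c2 x))" for x
    proof -
      have "(\<lambda>y. ennreal (exp (quad_poly S A b c (override_on x y (insert k T)))))
          \<in> borel_measurable (leb (insert k T))"
        by (intro measurable_compose[OF _ measurable_ennreal] measurable_compose[OF _ borel_measurable_exp]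
            borel_measurable_quad_poly borel_measurable_override_on_leb)
      moreover have "override_on x (y(k:=t)) (insert k T) = (override_on x y T)(k:=t)" for y t
        using insert.hyps by (auto simp: override_on_def)
      ultimately have "(\<integral>\<^sup>+y. ennreal (exp (quad_poly S A b c (override_on x y (insert k T)))) \<partial>leb (insert k T)) =
          (\<integral>\<^sup>+y. (\<integral>\<^sup>+t. ennreal (exp (quad_poly S A b c ((override_on x y T)(k:=t)))) \<partial>lborel) \<partial>leb T)"
        using insert.hyps by (simp add: lborel_prod.product_nn_integral_insert)
      then show ?thesis
        by (simp add: int_k int_T)
    qed
    moreover have "S - {k} - T = S - insert k T" by auto
    ultimately show ?case using nd2 by auto
  qed
qed

section \<open>Gaussian densities\<close>

lemma marg_override_on: "marg n f S x = (\<integral>y. f (override_on y x S) \<partial>leb ({..<n} - S))"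
  by (simp add: marg_def override_on_def)

lemma marg_cong:
  assumes "\<And>j. j \<in> S \<Longrightarrow> x j = y j"
  shows "marg n f S x = marg n f S y"
proof -
  have "override_on z x S = override_on z y S" for z
    using assms by (auto simp: override_on_def)
  then show ?thesis by (simp add: marg_override_on)
qed

lemma cond_dens_cong:
  assumes "\<And>j. j \<in> insert i S \<Longrightarrow> x j = y j"
  shows "cond_dens n f S i x = cond_dens n f S i y"
  using marg_cong[of "insert i S" x y n f] marg_cong[of S x y n f] assms by (simp add: cond_dens_def)

lemma integral_leb_merge_vec:
  fixes F :: "(nat \<Rightarrow> real) \<Rightarrow> real"
  assumes "n1 \<le> n" "integrable (leb {..<n}) F"
  shows "(\<integral>x. F x \<partial>leb {..<n}) = (\<integral>z. (\<integral>y. F (merge_vec n1 z y) \<partial>leb {n1..<n}) \<partial>leb {..<n1})"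
proof -
  have un: "{..<n1} \<union> {n1..<n} = {..<n}" and dj: "{..<n1} \<inter> {n1..<n} = {}"
    using assms(1) by auto
  have "(\<integral>x. F x \<partial>leb {..<n}) =
      (\<integral>z. (\<integral>y. F (merge {..<n1} {n1..<n} (z, y)) \<partial>leb {n1..<n}) \<partial>leb {..<n1})"
    using lborel_prod.product_integral_fold[OF dj, of F] assms(2) by (simp add: un)
  also have "\<dots> = (\<integral>z. (\<integral>y. F (merge_vec n1 z y) \<partial>leb {n1..<n}) \<partial>leb {..<n1})"
  proof (intro Bochner_Integration.integral_cong refl)
    fix z y assume "y \<in> space (leb {n1..<n})"
    then have "merge {..<n1} {n1..<n} (z, y) = merge_vec n1 z y"
      by (auto simp: merge_def merge_vec_def space_PiM PiE_def extensional_def)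
    then show "F (merge {..<n1} {n1..<n} (z, y)) = F (merge_vec n1 z y)" by simp
  qed
  finally show ?thesis .
qed

lemma abs_le_exp_plus_exp_minus: "\<bar>t::real\<bar> \<le> exp t + exp (- t)"
proof -
  have "\<bar>t\<bar> \<le> exp \<bar>t\<bar>" using exp_ge_add_one_self[of "\<bar>t\<bar>"] by linarith
  also have "\<dots> \<le> exp t + exp (- t)" by (cases "t \<ge> 0") auto
  finally show ?thesis .
qed

lemma abs_mult_le_sum_exp:
  "\<bar>s * t :: real\<bar> \<le> exp (2 * s) + exp (- 2 * s) + exp (2 * t) + exp (- 2 * t)"
proof -
  have square: "r\<^sup>2 \<le> exp (2 * r) + exp (- 2 * r)" for r :: real
  proof -
    have "r\<^sup>2 = \<bar>r\<bar>\<^sup>2" by simp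
    also have "\<dots> \<le> (exp \<bar>r\<bar>)\<^sup>2"
      using exp_ge_add_one_self[of "\<bar>r\<bar>"] by (intro power_mono) linarith+
    also have "\<dots> = exp (2 * \<bar>r\<bar>)" by (simp flip: exp_of_nat_mult)
    also have "\<dots> \<le> exp (2 * r) + exp (- 2 * r)" by (cases "r \<ge> 0") auto
    finally show ?thesis .
  qed
  have "2 * (\<bar>s\<bar> * \<bar>t\<bar>) \<le> s\<^sup>2 + t\<^sup>2"
    using sum_squares_bound[of "\<bar>s\<bar>" "\<bar>t\<bar>"] by (simp add: mult.assoc)
  moreover have "0 \<le> \<bar>s\<bar> * \<bar>t\<bar>" by simp
  ultimately have "\<bar>s * t\<bar> \<le> s\<^sup>2 + t\<^sup>2" unfolding abs_mult by linarith
  then show ?thesis using square[of s] square[of t] by linarith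
qed

locale gaussian_density =
  fixes n :: nat and f :: "(nat \<Rightarrow> real) \<Rightarrow> real"
    and A :: "nat \<Rightarrow> nat \<Rightarrow> real" and b :: "nat \<Rightarrow> real" and c :: real
  assumes neg_definite: "neg_definite_on {..<n} A"
    and f_eq: "f = (\<lambda>x. exp (quad_poly {..<n} A b c x))"
    and integral_f: "(\<integral>x. f x \<partial>leb {..<n}) = 1"
begin

lemma f_pos: "f x > 0"
  by (simp add: f_eq)

lemma f_cong:
  assumes "\<And>j. j < n \<Longrightarrow> x j = y j"
  shows "f x = f y"
  using quad_poly_cong[of "{..<n}" x y A b c] assms by (simp add: f_eq)

lemma borel_measurable_f_comp:
  assumes "\<And>j. j < n \<Longrightarrow> (\<lambda>y. h y j) \<in> borel_measurable M"
  shows "(\<lambda>y. f (h y)) \<in> borel_measurable M"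
  unfolding f_eq using assms
  by (intro measurable_compose[OF _ borel_measurable_exp] borel_measurable_quad_poly) auto

lemma borel_measurable_f: "f \<in> borel_measurable (leb {..<n})"
  using borel_measurable_f_comp[of "\<lambda>y. y"] borel_measurable_component_leb by auto

lemma borel_measurable_section:
  "S \<subseteq> {..<n} \<Longrightarrow> (\<lambda>y. f (override_on y x S)) \<in> borel_measurable (leb ({..<n} - S))"
  by (intro borel_measurable_f_comp borel_measurable_override_on_leb) auto

lemma has_bochner_integral_section:
  assumes "S \<subseteq> {..<n}"
  shows "\<exists>A' b' c'. \<forall>x. has_bochner_integral (leb ({..<n} - S))
    (\<lambda>y. f (override_on y x S)) (exp (quad_poly S A' b' c' x))"
proof -
  define T where "T = {..<n} - S"
  have T: "T \<subseteq> {..<n}" "{..<n} - T = S" using assms by (auto simp: T_def)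
  obtain A' b' c' where int: "\<And>x. (\<integral>\<^sup>+y. ennreal (exp (quad_poly {..<n} A b c (override_on x y T))) \<partial>leb T) =
      ennreal (exp (quad_poly S A' b' c' x))"
    using nn_integral_exp_quad_poly_override_on[OF _ T(1) neg_definite, of b c] T(2) by auto
  have "f (override_on y x S) = exp (quad_poly {..<n} A b c (override_on x y T))" for x y
    unfolding f_eq by (intro arg_cong[where f=exp] quad_poly_cong) (auto simp: T_def override_on_def)
  then have "has_bochner_integral (leb T) (\<lambda>y. f (override_on y x S)) (exp (quad_poly S A' b' c' x))" for x
    using int[of x] borel_measurable_section[OF assms, of x] f_pos
    by (intro has_bochner_integral_nn_integral) (auto simp: T_def less_imp_le)
  then show ?thesis unfolding T_def by blast
qed

lemma integrable_section:
  "S \<subseteq> {..<n} \<Longrightarrow> integrable (leb ({..<n} - S)) (\<lambda>y. f (override_on y x S))"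
  using has_bochner_integral_section by (meson integrable.intros)

lemma nn_integral_section:
  "S \<subseteq> {..<n} \<Longrightarrow> (\<integral>\<^sup>+y. ennreal (f (override_on y x S)) \<partial>leb ({..<n} - S)) = ennreal (marg n f S x)"
  using nn_integral_eq_integral[OF integrable_section] f_pos by (simp add: marg_override_on less_imp_le)

lemma marg_exp_quad_poly:
  assumes "S \<subseteq> {..<n}"
  shows "\<exists>A' b' c'. marg n f S = (\<lambda>x. exp (quad_poly S A' b' c' x))"
proof -
  obtain A' b' c' where "\<And>x. has_bochner_integral (leb ({..<n} - S))
      (\<lambda>y. f (override_on y x S)) (exp (quad_poly S A' b' c' x))"
    using has_bochner_integral_section[OF assms] by blast
  then have "marg n f S = (\<lambda>x. exp (quad_poly S A' b' c' x))"
    by (intro ext) (simp add: marg_override_on has_bochner_integral_integral_eq)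
  then show ?thesis by blast
qed

lemma marg_pos:
  assumes "S \<subseteq> {..<n}"
  shows "marg n f S x > 0"
proof -
  obtain A' b' c' where "marg n f S = (\<lambda>x. exp (quad_poly S A' b' c' x))"
    using marg_exp_quad_poly[OF assms] by blast
  then show ?thesis by simp
qed

lemma borel_measurable_marg_comp:
  assumes "S \<subseteq> {..<n}" "\<And>j. j \<in> S \<Longrightarrow> (\<lambda>y. h y j) \<in> borel_measurable M"
  shows "(\<lambda>y. marg n f S (h y)) \<in> borel_measurable M"
proof -
  obtain A' b' c' where "marg n f S = (\<lambda>x. exp (quad_poly S A' b' c' x))"
    using marg_exp_quad_poly[OF assms(1)] by blast
  then show ?thesis
    using assms(2) by (simp add: measurable_compose[OF _ borel_measurable_exp] borel_measurable_quad_poly)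
qed

lemma borel_measurable_marg:
  assumes "S \<subseteq> U" "U \<subseteq> {..<n}"
  shows "marg n f S \<in> borel_measurable (leb U)"
  by (rule borel_measurable_marg_comp) (use assms in \<open>auto intro!: borel_measurable_component_leb\<close>)

lemma cond_dens_pos: "S \<subseteq> {..<i} \<Longrightarrow> i < n \<Longrightarrow> cond_dens n f S i x > 0"
  unfolding cond_dens_def by (intro divide_pos_pos marg_pos) auto

lemma borel_measurable_cond_dens_comp:
  assumes "insert i S \<subseteq> {..<n}" "\<And>j. j \<in> insert i S \<Longrightarrow> (\<lambda>y. h y j) \<in> borel_measurable M"
  shows "(\<lambda>y. cond_dens n f S i (h y)) \<in> borel_measurable M"
  unfolding cond_dens_def using assms by (intro borel_measurable_divide borel_measurable_marg_comp) auto

lemma borel_measurable_cond_dens: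
  assumes "insert i S \<subseteq> U" "U \<subseteq> {..<n}"
  shows "cond_dens n f S i \<in> borel_measurable (leb U)"
  by (rule borel_measurable_cond_dens_comp) (use assms in \<open>auto intro!: borel_measurable_component_leb\<close>)

lemma integrable_f_mult_exp_linear: "integrable (leb {..<n}) (\<lambda>x. f x * exp (\<Sum>k<n. d k * x k))"
proof -
  let ?q = "quad_poly {..<n} A (\<lambda>k. b k + d k) c"
  have eq: "f x * exp (\<Sum>k<n. d k * x k) = exp (?q x)" for x
  proof -
    have "quad_poly {..<n} A b c x + (\<Sum>k<n. d k * x k) = ?q x"
      by (simp add: quad_poly_def sum.distrib distrib_right)
    then show ?thesis by (simp add: f_eq flip: exp_add)
  qed
  obtain A' b' c' where int: "\<And>x. (\<integral>\<^sup>+y. ennreal (exp (?q (override_on x y {..<n}))) \<partial>leb {..<n}) =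
      ennreal (exp (quad_poly {} A' b' c' x))"
    using nn_integral_exp_quad_poly_override_on[OF _ order_refl neg_definite, of "\<lambda>k. b k + d k" c]
    by auto
  have "?q (override_on x y {..<n}) = ?q y" for x y
    by (intro quad_poly_cong) simp
  then have "(\<integral>\<^sup>+y. ennreal (exp (?q y)) \<partial>leb {..<n}) = ennreal (exp (quad_poly {} A' b' c' x))" for x
    using int[of x] by simp
  from this[of undefined] have "(\<integral>\<^sup>+y. ennreal (exp (?q y)) \<partial>leb {..<n}) < \<infinity>"
    by simp
  moreover have "(\<lambda>y. exp (?q y)) \<in> borel_measurable (leb {..<n})"
    by (intro measurable_compose[OF _ borel_measurable_exp] borel_measurable_quad_poly
        borel_measurable_component_leb) simp
  ultimately show ?thesis
    unfolding eq by (intro integrableI_nonneg) auto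
qed

lemma integrable_f_mult_exp_component:
  assumes "i < n"
  shows "integrable (leb {..<n}) (\<lambda>x. f x * exp (s * x i))"
  using integrable_f_mult_exp_linear[of "\<lambda>k. if k = i then s else 0"] assms
  by (simp add: if_distrib[of "\<lambda>a. a * _"] cong: if_cong)

lemma integrable_f: "integrable (leb {..<n}) f"
  using integrable_f_mult_exp_linear[of "\<lambda>_. 0"] by simp

lemma integrable_f_mult_bound:
  assumes "integrable (leb {..<n}) (\<lambda>x. f x * B x)" "\<phi> \<in> borel_measurable (leb {..<n})"
    "\<And>x. \<bar>\<phi> x\<bar> \<le> B x"
  shows "integrable (leb {..<n}) (\<lambda>x. f x * \<phi> x)"
proof (rule Bochner_Integration.integrable_bound[OF assms(1)])
  show "(\<lambda>x. f x * \<phi> x) \<in> borel_measurable (leb {..<n})"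
    using borel_measurable_f assms(2) by measurable
  show "AE x in leb {..<n}. norm (f x * \<phi> x) \<le> norm (f x * B x)"
  proof (rule AE_I2)
    fix x
    have "norm (f x * \<phi> x) = f x * \<bar>\<phi> x\<bar>" using f_pos[of x] by (simp add: abs_mult)
    also have "\<dots> \<le> f x * B x" using f_pos[of x] assms(3)[of x] by (simp add: mult_left_mono)
    also have "\<dots> \<le> norm (f x * B x)" by simp
    finally show "norm (f x * \<phi> x) \<le> norm (f x * B x)" .
  qed
qed

lemma integrable_f_mult_component:
  assumes "i < n"
  shows "integrable (leb {..<n}) (\<lambda>x. f x * x i)"
proof (rule integrable_f_mult_bound)
  show "integrable (leb {..<n}) (\<lambda>x. f x * (exp (x i) + exp (- x i)))"
    using integrable_f_mult_exp_component[OF assms, of 1] integrable_f_mult_exp_component[OF assms, of "-1"]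
    by (simp add: distrib_left)
  show "(\<lambda>x. x i) \<in> borel_measurable (leb {..<n})"
    using assms by (simp add: borel_measurable_component_leb)
  show "\<bar>x i\<bar> \<le> exp (x i) + exp (- x i)" for x :: "nat \<Rightarrow> real"
    by (rule abs_le_exp_plus_exp_minus)
qed

lemma integrable_f_mult_component_mult:
  assumes "i < n" "l < n"
  shows "integrable (leb {..<n}) (\<lambda>x. f x * (x i * x l))"
proof (rule integrable_f_mult_bound)
  show "integrable (leb {..<n})
      (\<lambda>x. f x * (exp (2 * x i) + exp (- 2 * x i) + exp (2 * x l) + exp (- 2 * x l)))"
    using integrable_f_mult_exp_component[OF assms(1), of 2] integrable_f_mult_exp_component[OF assms(1), of "-2"]
      integrable_f_mult_exp_component[OF assms(2), of 2] integrable_f_mult_exp_component[OF assms(2), of "-2"]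
    by (simp add: distrib_left)
  show "(\<lambda>x. x i * x l) \<in> borel_measurable (leb {..<n})"
    using assms by (simp add: borel_measurable_component_leb)
  show "\<bar>x i * x l\<bar> \<le> exp (2 * x i) + exp (- 2 * x i) + exp (2 * x l) + exp (- 2 * x l)"
    for x :: "nat \<Rightarrow> real"
    by (rule abs_mult_le_sum_exp)
qed

lemma integrable_f_mult_quad_poly:
  assumes "U \<subseteq> {..<n}"
  shows "integrable (leb {..<n}) (\<lambda>x. f x * quad_poly U A' b' c' x)"
proof -
  have "f x * quad_poly U A' b' c' x =
      (\<Sum>i\<in>U. \<Sum>l\<in>U. A' i l * (f x * (x i * x l))) + (\<Sum>i\<in>U. b' i * (f x * x i)) + c' * f x" for x
    by (simp add: quad_poly_def algebra_simps sum_distrib_left)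
  moreover have "\<And>i. i \<in> U \<Longrightarrow> i < n" using assms by auto
  ultimately show ?thesis
    using integrable_f_mult_component_mult integrable_f_mult_component integrable_f by simp
qed

lemma integrable_f_ln_f: "integrable (leb {..<n}) (\<lambda>x. f x * ln (f x))"
  using integrable_f_mult_quad_poly[of "{..<n}" A b c] by (simp add: f_eq)

lemma integrable_f_ln_marg:
  assumes "S \<subseteq> {..<n}"
  shows "integrable (leb {..<n}) (\<lambda>x. f x * ln (marg n f S x))"
proof -
  obtain A' b' c' where "marg n f S = (\<lambda>x. exp (quad_poly S A' b' c' x))"
    using marg_exp_quad_poly[OF assms] by blast
  then show ?thesis using integrable_f_mult_quad_poly[OF assms] by simp
qed

lemma integrable_f_ln_cond_dens:
  assumes "S \<subseteq> {..<i}" "i < n"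
  shows "integrable (leb {..<n}) (\<lambda>x. f x * ln (cond_dens n f S i x))"
proof -
  have S: "insert i S \<subseteq> {..<n}" "S \<subseteq> {..<n}" using assms by auto
  have "f x * ln (cond_dens n f S i x) = f x * ln (marg n f (insert i S) x) - f x * ln (marg n f S x)" for x
    using marg_pos[OF S(1), of x] marg_pos[OF S(2), of x] by (simp add: cond_dens_def ln_div right_diff_distrib)
  then show ?thesis
    using integrable_f_ln_marg[OF S(1)] integrable_f_ln_marg[OF S(2)] by simp
qed

section \<open>Conditional densities and Gibbs' inequality\<close>

lemma nn_integral_f_mult_eq_marg:
  assumes S: "S \<subseteq> {..<n}" and \<phi>: "\<phi> \<in> borel_measurable (leb {..<n})" "\<And>x. \<phi> x \<ge> 0"
    and \<phi>_cong: "\<And>x y. (\<And>j. j \<in> S \<Longrightarrow> x j = y j) \<Longrightarrow> \<phi> x = \<phi> y"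
  shows "(\<integral>\<^sup>+x. ennreal (f x * \<phi> x) \<partial>leb {..<n}) = (\<integral>\<^sup>+x. ennreal (marg n f S x * \<phi> x) \<partial>leb S)"
proof -
  define T where "T = {..<n} - S"
  have ST: "S \<inter> T = {}" "finite S" "finite T" "S \<union> T = {..<n}"
    using S finite_subset by (auto simp: T_def)
  have "(\<integral>\<^sup>+x. ennreal (f x * \<phi> x) \<partial>leb {..<n}) =
      (\<integral>\<^sup>+x. (\<integral>\<^sup>+y. ennreal (f (merge S T (x, y)) * \<phi> (merge S T (x, y))) \<partial>leb T) \<partial>leb S)"
    using lborel_prod.product_nn_integral_fold[OF ST(1-3), of "\<lambda>x. ennreal (f x * \<phi> x)"]
      borel_measurable_f \<phi>(1) by (simp add: ST(4))
  also have "\<dots> = (\<integral>\<^sup>+x. ennreal (marg n f S x * \<phi> x) \<partial>leb S)"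
  proof (intro nn_integral_cong)
    fix x
    have "f (merge S T (x, y)) = f (override_on y x S)" for y
      by (intro f_cong) (auto simp: merge_def override_on_def T_def)
    moreover have "\<phi> (merge S T (x, y)) = \<phi> x" for y
      by (intro \<phi>_cong) (simp add: merge_def)
    ultimately have "(\<integral>\<^sup>+y. ennreal (f (merge S T (x, y)) * \<phi> (merge S T (x, y))) \<partial>leb T) =
        (\<integral>\<^sup>+y. ennreal (\<phi> x) * ennreal (f (override_on y x S)) \<partial>leb T)"
      using \<phi>(2) by (simp add: ennreal_mult' mult.commute)
    also have "\<dots> = ennreal (\<phi> x) * ennreal (marg n f S x)"
      using borel_measurable_section[OF S, of x] nn_integral_section[OF S, of x]
      by (simp add: nn_integral_cmult T_def)
    finally show "(\<integral>\<^sup>+y. ennreal (f (merge S T (x, y)) * \<phi> (merge S T (x, y))) \<partial>leb T) =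
        ennreal (marg n f S x * \<phi> x)"
      using \<phi>(2) by (simp add: ennreal_mult' mult.commute)
  qed
  finally show ?thesis .
qed

lemma nn_integral_marg_insert:
  assumes i: "i \<notin> S" and S: "insert i S \<subseteq> {..<n}"
  shows "(\<integral>\<^sup>+t. ennreal (marg n f (insert i S) (x(i:=t))) \<partial>lborel) = ennreal (marg n f S x)"
proof -
  define T where "T = {..<n} - insert i S"
  have T: "{..<n} - S = insert i T" "i \<notin> T" "finite T" using i S by (auto simp: T_def)
  have "ennreal (marg n f S x) = (\<integral>\<^sup>+y. ennreal (f (override_on y x S)) \<partial>leb (insert i T))"
    using nn_integral_section[of S x] S by (simp add: T(1))
  also have "\<dots> = (\<integral>\<^sup>+t. (\<integral>\<^sup>+y. ennreal (f (override_on (y(i:=t)) x S)) \<partial>leb T) \<partial>lborel)"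
    using borel_measurable_section[of S x] S T
    by (intro lborel_prod.product_nn_integral_insert_rev) auto
  also have "\<dots> = (\<integral>\<^sup>+t. ennreal (marg n f (insert i S) (x(i:=t))) \<partial>lborel)"
  proof (intro nn_integral_cong)
    fix t
    have "override_on (y(i:=t)) x S = override_on y (x(i:=t)) (insert i S)" for y
      using i by (auto simp: override_on_def)
    then show "(\<integral>\<^sup>+y. ennreal (f (override_on (y(i:=t)) x S)) \<partial>leb T) =
        ennreal (marg n f (insert i S) (x(i:=t)))"
      using nn_integral_section[OF S, of "x(i:=t)"] by (simp add: T_def)
  qed
  finally show ?thesis ..
qed

lemma nn_integral_cond_dens_fun_upd:
  assumes i: "i \<notin> S" and S: "insert i S \<subseteq> {..<n}"
  shows "(\<integral>\<^sup>+t. ennreal (cond_dens n f S i (x(i:=t))) \<partial>lborel) = 1"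
proof -
  let ?m = "marg n f S x"
  have pos: "?m > 0" using S by (intro marg_pos) auto
  have "marg n f S (x(i:=t)) = ?m" for t
    using i by (intro marg_cong) auto
  then have "(\<integral>\<^sup>+t. ennreal (cond_dens n f S i (x(i:=t))) \<partial>lborel) =
      (\<integral>\<^sup>+t. ennreal (1 / ?m) * ennreal (marg n f (insert i S) (x(i:=t))) \<partial>lborel)"
    using pos by (simp add: cond_dens_def ennreal_mult' divide_inverse mult.commute)
  also have "\<dots> = ennreal (1 / ?m) * ennreal ?m"
  proof -
    have "(\<lambda>t. ennreal (marg n f (insert i S) (x(i:=t)))) \<in> borel_measurable lborel"
      using S borel_measurable_fun_upd_apply
      by (intro measurable_compose[OF _ measurable_ennreal] borel_measurable_marg_comp) auto
    then show ?thesis using nn_integral_marg_insert[OF i S] by (simp add: nn_integral_cmult)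
  qed
  also have "\<dots> = 1"
    using pos by (simp flip: ennreal_mult')
  finally show ?thesis .
qed

lemma nn_integral_marg_mult_cond_dens:
  assumes i: "i \<notin> G" and G: "insert i G \<subseteq> {..<n}" and HG: "H \<subseteq> G"
  shows "(\<integral>\<^sup>+x. ennreal (marg n f G x * cond_dens n f H i x) \<partial>leb (insert i G)) =
    (\<integral>\<^sup>+x. ennreal (marg n f G x) \<partial>leb G)"
proof -
  let ?m = "marg n f G" and ?c = "cond_dens n f H i"
  have "finite G" "i \<notin> H" "insert i H \<subseteq> {..<n}" using G i HG finite_subset by auto
  have "(\<integral>\<^sup>+x. ennreal (?m x * ?c x) \<partial>leb (insert i G)) =
      (\<integral>\<^sup>+x. (\<integral>\<^sup>+t. ennreal (?m (x(i:=t)) * ?c (x(i:=t))) \<partial>lborel) \<partial>leb G)"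
    using \<open>finite G\<close> i G HG
    by (intro lborel_prod.product_nn_integral_insert measurable_compose[OF _ measurable_ennreal]
        borel_measurable_times borel_measurable_marg borel_measurable_cond_dens) auto
  also have "\<dots> = (\<integral>\<^sup>+x. ennreal (?m x) \<partial>leb G)"
  proof (intro nn_integral_cong)
    fix x
    have "?m (x(i:=t)) = ?m x" for t
      using i by (intro marg_cong) auto
    moreover have "(\<lambda>t. ennreal (?c (x(i:=t)))) \<in> borel_measurable lborel"
      using \<open>insert i H \<subseteq> {..<n}\<close> borel_measurable_fun_upd_apply
      by (intro measurable_compose[OF _ measurable_ennreal] borel_measurable_cond_dens_comp) auto
    ultimately show "(\<integral>\<^sup>+t. ennreal (?m (x(i:=t)) * ?c (x(i:=t))) \<partial>lborel) = ennreal (?m x)"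
      using G marg_pos[of G x] nn_integral_cond_dens_fun_upd[OF \<open>i \<notin> H\<close> \<open>insert i H \<subseteq> {..<n}\<close>, of x]
      by (simp add: ennreal_mult' nn_integral_cmult)
  qed
  finally show ?thesis .
qed

lemma nn_integral_f_mult_cond_dens_ratio:
  assumes HG: "H \<subseteq> G" and G: "G \<subseteq> {..<i}" and i: "i < n"
  shows "(\<integral>\<^sup>+x. ennreal (f x * (cond_dens n f H i x / cond_dens n f G i x)) \<partial>leb {..<n}) = 1"
proof -
  let ?m = "marg n f" and ?cH = "cond_dens n f H i" and ?cG = "cond_dens n f G i"
  have iG: "i \<notin> G" "insert i G \<subseteq> {..<n}" "G \<subseteq> {..<n}" using G i by auto
  have H: "H \<subseteq> {..<i}" using HG G by auto
  have "(\<integral>\<^sup>+x. ennreal (f x * (?cH x / ?cG x)) \<partial>leb {..<n}) =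
      (\<integral>\<^sup>+x. ennreal (?m (insert i G) x * (?cH x / ?cG x)) \<partial>leb (insert i G))"
  proof (rule nn_integral_f_mult_eq_marg[OF iG(2)])
    show "(\<lambda>x. ?cH x / ?cG x) \<in> borel_measurable (leb {..<n})"
      using iG HG by (intro borel_measurable_divide borel_measurable_cond_dens) auto
    show "0 \<le> ?cH x / ?cG x" for x
      using cond_dens_pos[OF H i, of x] cond_dens_pos[OF G i, of x] by simp
    show "?cH x / ?cG x = ?cH y / ?cG y" if "\<And>j. j \<in> insert i G \<Longrightarrow> x j = y j" for x y
    proof -
      have "?cH x = ?cH y" using that HG by (intro cond_dens_cong) auto
      moreover have "?cG x = ?cG y" using that by (intro cond_dens_cong) auto
      ultimately show ?thesis by simp
    qed
  qed
  also have "\<dots> = (\<integral>\<^sup>+x. ennreal (?m G x * ?cH x) \<partial>leb (insert i G))"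
  proof (intro nn_integral_cong)
    fix x
    have "?m (insert i G) x > 0" "?m G x > 0" using marg_pos iG by auto
    then show "ennreal (?m (insert i G) x * (?cH x / ?cG x)) = ennreal (?m G x * ?cH x)"
      by (simp add: cond_dens_def mult.commute)
  qed
  also have "\<dots> = (\<integral>\<^sup>+x. ennreal (?m G x) \<partial>leb G)"
    by (rule nn_integral_marg_mult_cond_dens[OF iG(1,2) HG])
  also have "\<dots> = (\<integral>\<^sup>+x. ennreal (f x) \<partial>leb {..<n})"
    using nn_integral_f_mult_eq_marg[OF iG(3), of "\<lambda>_. 1"] by simp
  also have "\<dots> = 1"
    using nn_integral_eq_integral[OF integrable_f] integral_f f_pos by (simp add: less_imp_le)
  finally show ?thesis .
qed

text \<open>Gibbs' inequality \<open>ln r \<le> r - 1\<close>, applied to the ratio above.\<close>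

lemma integral_f_ln_cond_dens_mono:
  assumes HG: "H \<subseteq> G" and G: "G \<subseteq> {..<i}" and i: "i < n"
  shows "(\<integral>x. f x * ln (cond_dens n f H i x) \<partial>leb {..<n}) \<le>
    (\<integral>x. f x * ln (cond_dens n f G i x) \<partial>leb {..<n})"
proof -
  let ?cH = "cond_dens n f H i" and ?cG = "cond_dens n f G i"
  define R where "R x = ?cH x / ?cG x" for x
  have H: "H \<subseteq> {..<i}" using HG G by auto
  have pos: "?cH x > 0" "?cG x > 0" for x
    using cond_dens_pos[OF H i] cond_dens_pos[OF G i] by auto
  have "has_bochner_integral (leb {..<n}) (\<lambda>x. f x * R x) 1"
  proof (rule has_bochner_integral_nn_integral)
    show "(\<lambda>x. f x * R x) \<in> borel_measurable (leb {..<n})"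
      unfolding R_def using G H i
      by (intro borel_measurable_times borel_measurable_f borel_measurable_divide borel_measurable_cond_dens)
        auto
    show "AE x in leb {..<n}. 0 \<le> f x * R x"
      using f_pos pos by (simp add: R_def less_imp_le)
    show "(\<integral>\<^sup>+x. ennreal (f x * R x) \<partial>leb {..<n}) = ennreal 1"
      using nn_integral_f_mult_cond_dens_ratio[OF HG G i] by (simp add: R_def)
  qed simp
  then have int_R: "integrable (leb {..<n}) (\<lambda>x. f x * R x)" and "(\<integral>x. f x * R x \<partial>leb {..<n}) = 1"
    by (auto intro: integrable.intros simp: has_bochner_integral_integral_eq)
  then have "0 = (\<integral>x. f x - f x * R x \<partial>leb {..<n})"
    using integral_f integrable_f by simp
  also have "\<dots> \<le> (\<integral>x. f x * ln (?cG x) - f x * ln (?cH x) \<partial>leb {..<n})"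
  proof (rule integral_mono)
    show "integrable (leb {..<n}) (\<lambda>x. f x - f x * R x)"
      using integrable_f int_R by simp
    show "integrable (leb {..<n}) (\<lambda>x. f x * ln (?cG x) - f x * ln (?cH x))"
      using integrable_f_ln_cond_dens[OF G i] integrable_f_ln_cond_dens[OF H i] by simp
    fix x
    have "ln (R x) \<le> R x - 1" using pos by (intro ln_le_minus_one) (simp add: R_def)
    moreover have "ln (R x) = ln (?cH x) - ln (?cG x)" by (simp add: R_def ln_divide_pos[OF pos(1) pos(2)])
    ultimately have "f x * (1 - R x) \<le> f x * (ln (?cG x) - ln (?cH x))"
      using f_pos[of x] by (intro mult_left_mono) auto
    then show "f x - f x * R x \<le> f x * ln (?cG x) - f x * ln (?cH x)"
      by (simp add: right_diff_distrib)
  qed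
  also have "\<dots> = (\<integral>x. f x * ln (?cG x) \<partial>leb {..<n}) - (\<integral>x. f x * ln (?cH x) \<partial>leb {..<n})"
    using integrable_f_ln_cond_dens[OF G i] integrable_f_ln_cond_dens[OF H i] by simp
  finally show ?thesis by simp
qed

lemma sum_integral_f_ln_cond_dens_mono:
  assumes "I \<subseteq> {..<n}" "\<forall>i\<in>I. g1 i \<subseteq> g2 i" "\<forall>i<n. g2 i \<subseteq> {..<i}"
  shows "(\<Sum>i\<in>I. \<integral>x. f x * ln (cond_dens n f (g1 i) i x) \<partial>leb {..<n}) \<le>
    (\<Sum>i\<in>I. \<integral>x. f x * ln (cond_dens n f (g2 i) i x) \<partial>leb {..<n})"
  using assms by (intro sum_mono integral_f_ln_cond_dens_mono) auto

section \<open>Vecchia approximations\<close>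

lemma vecchia_pos: "\<forall>i<n. g i \<subseteq> {..<i} \<Longrightarrow> vecchia n f g x > 0"
  unfolding vecchia_def using cond_dens_pos by (intro prod_pos) auto

lemma ln_vecchia:
  assumes "\<forall>i<n. g i \<subseteq> {..<i}"
  shows "ln (vecchia n f g x) = (\<Sum>i<n. ln (cond_dens n f (g i) i x))"
  unfolding vecchia_def using assms cond_dens_pos by (intro ln_prod) (auto simp: less_imp_neq[symmetric])

lemma borel_measurable_prod_cond_dens_override_on:
  assumes g: "\<forall>i<n. g i \<subseteq> {..<i}" and "k \<le> n"
  shows "(\<lambda>y. \<Prod>i<k. cond_dens n f (g i) i (override_on y z {..<n1})) \<in> borel_measurable (leb {n1..<k})"
proof (rule borel_measurable_prod)
  fix i assume "i \<in> {..<k}"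
  then have "g i \<subseteq> {..<i}" "i < k" using g \<open>k \<le> n\<close> by auto
  then have sub: "insert i (g i) \<subseteq> {..<k}" "insert i (g i) \<subseteq> {..<n}" using \<open>k \<le> n\<close> by auto
  show "(\<lambda>y. cond_dens n f (g i) i (override_on y z {..<n1})) \<in> borel_measurable (leb {n1..<k})"
  proof (rule borel_measurable_cond_dens_comp[OF sub(2)])
    fix j assume "j \<in> insert i (g i)"
    then have "j < k" using sub(1) by auto
    then show "(\<lambda>y. override_on y z {..<n1} j) \<in> borel_measurable (leb {n1..<k})"
      by (intro borel_measurable_override_on_leb(2)) auto
  qed
qed

lemma nn_integral_prod_cond_dens_fun_upd:
  assumes g: "\<forall>i<n. g i \<subseteq> {..<i}" and k: "k < n"
  shows "(\<integral>\<^sup>+t. ennreal (\<Prod>i<Suc k. cond_dens n f (g i) i (x(k:=t))) \<partial>lborel) =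
    ennreal (\<Prod>i<k. cond_dens n f (g i) i x)"
proof -
  let ?c = "\<lambda>i. cond_dens n f (g i) i"
  have "g k \<subseteq> {..<k}" using g k by simp
  then have gk: "k \<notin> g k" "insert k (g k) \<subseteq> {..<n}" using k by auto
  have "?c i (x(k:=t)) = ?c i x" if "i < k" for i t
  proof -
    have "g i \<subseteq> {..<i}" using g that k by auto
    then show ?thesis using that by (intro cond_dens_cong) auto
  qed
  then have P: "(\<Prod>i<Suc k. ?c i (x(k:=t))) = (\<Prod>i<k. ?c i x) * ?c k (x(k:=t))" for t
    by simp
  have "(\<Prod>i<k. ?c i x) \<ge> 0"
    using g k cond_dens_pos by (intro prod_nonneg) (auto simp: less_imp_le)
  then have "(\<integral>\<^sup>+t. ennreal (\<Prod>i<Suc k. ?c i (x(k:=t))) \<partial>lborel) =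
      (\<integral>\<^sup>+t. ennreal (\<Prod>i<k. ?c i x) * ennreal (?c k (x(k:=t))) \<partial>lborel)"
    by (simp only: P) (simp add: ennreal_mult')
  also have "\<dots> = ennreal (\<Prod>i<k. ?c i x)"
  proof -
    have "(\<lambda>t. ennreal (?c k (x(k:=t)))) \<in> borel_measurable lborel"
      using gk borel_measurable_fun_upd_apply
      by (intro measurable_compose[OF _ measurable_ennreal] borel_measurable_cond_dens_comp) auto
    then show ?thesis
      using nn_integral_cond_dens_fun_upd[OF gk] by (simp add: nn_integral_cmult)
  qed
  finally show ?thesis .
qed

lemma nn_integral_prod_cond_dens_override_on:
  assumes g: "\<forall>i<n. g i \<subseteq> {..<i}" and "n1 \<le> k" "k \<le> n"
  shows "(\<integral>\<^sup>+y. ennreal (\<Prod>i<k. cond_dens n f (g i) i (override_on y z {..<n1})) \<partial>leb {n1..<k}) =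
    ennreal (\<Prod>i<n1. cond_dens n f (g i) i z)"
  using assms(2,3)
proof (induction k rule: dec_induct)
  case base
  have "cond_dens n f (g i) i (override_on (\<lambda>_. undefined) z {..<n1}) = cond_dens n f (g i) i z"
    if "i < n1" for i
  proof -
    have "g i \<subseteq> {..<i}" using g that assms(2,3) by auto
    then show ?thesis using that by (intro cond_dens_cong) auto
  qed
  then show ?case by (simp add: lborel_prod.nn_integral_empty)
next
  case (step k)
  let ?P = "\<lambda>k y. \<Prod>i<k. cond_dens n f (g i) i (override_on y z {..<n1})"
  have ins: "{n1..<Suc k} = insert k {n1..<k}" using step.hyps(1) by auto
  have upd: "override_on (y(k:=t)) z {..<n1} = (override_on y z {..<n1})(k:=t)" for y t
    using step.hyps(1) by (auto simp: override_on_def)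
  have "(\<integral>\<^sup>+y. ennreal (?P (Suc k) y) \<partial>leb {n1..<Suc k}) =
      (\<integral>\<^sup>+y. (\<integral>\<^sup>+t. ennreal (?P (Suc k) (y(k:=t))) \<partial>lborel) \<partial>leb {n1..<k})"
    unfolding ins
  proof (rule lborel_prod.product_nn_integral_insert)
    show "(\<lambda>y. ennreal (?P (Suc k) y)) \<in> borel_measurable (leb (insert k {n1..<k}))"
      using borel_measurable_prod_cond_dens_override_on[OF g step.prems, of z n1]
      unfolding ins by (rule measurable_compose[OF _ measurable_ennreal])
  qed auto
  also have "\<dots> = (\<integral>\<^sup>+y. ennreal (?P k y) \<partial>leb {n1..<k})"
    using g step.prems by (simp only: upd nn_integral_prod_cond_dens_fun_upd Suc_le_eq)
  finally show ?case
    using step.IH step.prems by simp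
qed

lemma marg_vecchia_prefix:
  assumes g: "\<forall>i<n. g i \<subseteq> {..<i}" and n1: "n1 \<le> n"
  shows "marg n (vecchia n f g) {..<n1} z = (\<Prod>i<n1. cond_dens n f (g i) i z)"
proof -
  have "has_bochner_integral (leb {n1..<n}) (\<lambda>y. vecchia n f g (override_on y z {..<n1}))
      (\<Prod>i<n1. cond_dens n f (g i) i z)"
  proof (rule has_bochner_integral_nn_integral)
    show "(\<lambda>y. vecchia n f g (override_on y z {..<n1})) \<in> borel_measurable (leb {n1..<n})"
      unfolding vecchia_def by (rule borel_measurable_prod_cond_dens_override_on[OF g order_refl])
    show "AE y in leb {n1..<n}. 0 \<le> vecchia n f g (override_on y z {..<n1})"
      using vecchia_pos[OF g] by (simp add: less_imp_le)
    show "0 \<le> (\<Prod>i<n1. cond_dens n f (g i) i z)"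
      using g n1 cond_dens_pos by (intro prod_nonneg) (auto simp: less_imp_le)
    show "(\<integral>\<^sup>+y. ennreal (vecchia n f g (override_on y z {..<n1})) \<partial>leb {n1..<n}) =
        ennreal (\<Prod>i<n1. cond_dens n f (g i) i z)"
      unfolding vecchia_def by (rule nn_integral_prod_cond_dens_override_on[OF g n1 order_refl])
  qed
  moreover have "{..<n} - {..<n1} = {n1..<n}" by auto
  ultimately show ?thesis
    by (simp add: marg_override_on has_bochner_integral_integral_eq)
qed

lemma vecchia_div_marg_vecchia_prefix:
  assumes g: "\<forall>i<n. g i \<subseteq> {..<i}" and n1: "n1 \<le> n"
  shows "vecchia n f g x / marg n (vecchia n f g) {..<n1} x = (\<Prod>i\<in>{n1..<n}. cond_dens n f (g i) i x)"
proof -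
  have eq: "vecchia n f g x = (\<Prod>i<n1. cond_dens n f (g i) i x) * (\<Prod>i\<in>{n1..<n}. cond_dens n f (g i) i x)"
    unfolding vecchia_def
    using prod.atLeastLessThan_concat[of 0 n1 n "\<lambda>i. cond_dens n f (g i) i x"] n1
    by (simp add: atLeast0LessThan)
  have "(\<Prod>i<n1. cond_dens n f (g i) i x) > 0"
    using g n1 cond_dens_pos by (intro prod_pos) auto
  then have "(\<Prod>i<n1. cond_dens n f (g i) i x) \<noteq> 0" by linarith
  then show ?thesis
    by (simp add: eq marg_vecchia_prefix[OF g n1])
qed

lemma KL_vecchia:
  assumes g: "\<forall>i<n. g i \<subseteq> {..<i}"
  shows "KL n f (vecchia n f g) = (\<integral>x. f x * ln (f x) \<partial>leb {..<n}) -
    (\<Sum>i<n. \<integral>x. f x * ln (cond_dens n f (g i) i x) \<partial>leb {..<n})"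
proof -
  have int: "integrable (leb {..<n}) (\<lambda>x. f x * ln (cond_dens n f (g i) i x))" if "i \<in> {..<n}" for i
    using g that by (intro integrable_f_ln_cond_dens) auto
  have "f x * ln (f x / vecchia n f g x) = f x * ln (f x) - (\<Sum>i<n. f x * ln (cond_dens n f (g i) i x))" for x
    using f_pos[of x] vecchia_pos[OF g, of x]
    by (simp add: ln_divide_pos ln_vecchia[OF g] right_diff_distrib sum_distrib_left)
  then have "KL n f (vecchia n f g) =
      (\<integral>x. f x * ln (f x) - (\<Sum>i<n. f x * ln (cond_dens n f (g i) i x)) \<partial>leb {..<n})"
    by (simp add: KL_def)
  also have "\<dots> = (\<integral>x. f x * ln (f x) \<partial>leb {..<n}) -
      (\<Sum>i<n. \<integral>x. f x * ln (cond_dens n f (g i) i x) \<partial>leb {..<n})"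
  proof -
    have "integrable (leb {..<n}) (\<lambda>x. \<Sum>i<n. f x * ln (cond_dens n f (g i) i x))"
      using int by (rule Bochner_Integration.integrable_sum)
    then show ?thesis
      using int by (simp add: Bochner_Integration.integral_diff[OF integrable_f_ln_f])
  qed
  finally show ?thesis .
qed

lemma marg_mult_CKL_integrand_vecchia:
  assumes g: "\<forall>i<n. g i \<subseteq> {..<i}" and n1: "n1 \<le> n"
  defines "m \<equiv> marg n f {..<n1}"
  shows "m x * (f x / m x * ln (f x / m x / (vecchia n f g x / marg n (vecchia n f g) {..<n1} x))) =
    f x * ln (f x) - f x * ln (m x) - (\<Sum>i\<in>{n1..<n}. f x * ln (cond_dens n f (g i) i x))"
proof -
  let ?P = "\<Prod>i\<in>{n1..<n}. cond_dens n f (g i) i x"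
  have m: "m x > 0" unfolding m_def using n1 by (intro marg_pos) auto
  have "?P > 0"
    using g cond_dens_pos by (intro prod_pos) auto
  then have "ln (f x / m x / ?P) = ln (f x) - ln (m x) - ln ?P"
    using f_pos[of x] m by (simp only: ln_divide_pos divide_pos_pos)
  also have "ln ?P = (\<Sum>i\<in>{n1..<n}. ln (cond_dens n f (g i) i x))"
    using g cond_dens_pos by (intro ln_prod) (auto simp: less_imp_neq[symmetric])
  finally show ?thesis
    using m by (simp add: vecchia_div_marg_vecchia_prefix[OF g n1] right_diff_distrib sum_distrib_left)
qed

lemma CKL_vecchia:
  assumes g: "\<forall>i<n. g i \<subseteq> {..<i}" and n1: "n1 \<le> n"
  shows "CKL n1 n f (vecchia n f g) = (\<integral>x. f x * ln (f x) \<partial>leb {..<n}) -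
    (\<integral>x. f x * ln (marg n f {..<n1} x) \<partial>leb {..<n}) -
    (\<Sum>i\<in>{n1..<n}. \<integral>x. f x * ln (cond_dens n f (g i) i x) \<partial>leb {..<n})"
proof -
  let ?m = "marg n f {..<n1}" and ?c = "\<lambda>i. cond_dens n f (g i) i"
  define G where "G x = f x / ?m x * ln (f x / ?m x / (vecchia n f g x / marg n (vecchia n f g) {..<n1} x))"
    for x
  define F where "F x = f x * ln (f x) - f x * ln (?m x) - (\<Sum>i\<in>{n1..<n}. f x * ln (?c i x))" for x
  have GF: "?m x * G x = F x" for x
    unfolding G_def F_def by (rule marg_mult_CKL_integrand_vecchia[OF g n1])
  have int_c: "integrable (leb {..<n}) (\<lambda>x. f x * ln (?c i x))" if "i \<in> {n1..<n}" for i
    using g that by (intro integrable_f_ln_cond_dens) auto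
  have int_sum: "integrable (leb {..<n}) (\<lambda>x. \<Sum>i\<in>{n1..<n}. f x * ln (?c i x))"
    using int_c by (rule Bochner_Integration.integrable_sum)
  have int_m: "integrable (leb {..<n}) (\<lambda>x. f x * ln (?m x))"
    using n1 by (intro integrable_f_ln_marg) auto
  have int_F: "integrable (leb {..<n}) F"
    unfolding F_def[abs_def] using integrable_f_ln_f int_m int_sum by simp
  have "CKL n1 n f (vecchia n f g) = (\<integral>z. ?m z * (\<integral>y. G (merge_vec n1 z y) \<partial>leb {n1..<n}) \<partial>leb {..<n1})"
    unfolding CKL_def Let_def G_def ..
  also have "\<dots> = (\<integral>z. (\<integral>y. F (merge_vec n1 z y) \<partial>leb {n1..<n}) \<partial>leb {..<n1})"
  proof (intro Bochner_Integration.integral_cong refl)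
    fix z
    have "?m (merge_vec n1 z y) = ?m z" for y
      by (intro marg_cong) (simp add: merge_vec_def)
    then show "?m z * (\<integral>y. G (merge_vec n1 z y) \<partial>leb {n1..<n}) = (\<integral>y. F (merge_vec n1 z y) \<partial>leb {n1..<n})"
      by (simp flip: GF)
  qed
  also have "\<dots> = (\<integral>x. F x \<partial>leb {..<n})"
    by (rule integral_leb_merge_vec[symmetric, OF n1 int_F])
  also have "\<dots> = (\<integral>x. f x * ln (f x) \<partial>leb {..<n}) - (\<integral>x. f x * ln (?m x) \<partial>leb {..<n}) -
      (\<Sum>i\<in>{n1..<n}. \<integral>x. f x * ln (?c i x) \<partial>leb {..<n})"
    unfolding F_def using integrable_f_ln_f int_m int_sum int_c by simp
  finally show ?thesis .
qed

end

lemma is_mvn_density_gaussian_density: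
  assumes "is_mvn_density n f"
  shows "\<exists>A b c. gaussian_density n f A b c"
proof -
  obtain mu P c0 where sym: "\<forall>i<n. \<forall>j<n. P i j = P j i"
    and pd: "\<forall>v :: nat \<Rightarrow> real. (\<exists>i<n. v i \<noteq> 0) \<longrightarrow> (\<Sum>i<n. \<Sum>j<n. v i * P i j * v j) > 0"
    and c0: "c0 > 0"
    and f: "f = (\<lambda>x. c0 * exp (- (1/2) * (\<Sum>i<n. \<Sum>j<n. (x i - mu i) * P i j * (x j - mu j))))"
    and int: "(\<integral>x. f x \<partial>leb {..<n}) = 1"
    using assms unfolding is_mvn_density_def by blast
  define A where "A i j = - P i j / 2" for i j
  define b where "b i = (\<Sum>j<n. P i j * mu j)" for i
  define c where "c = ln c0 - (\<Sum>i<n. \<Sum>j<n. mu i * P i j * mu j) / 2"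
  have quad_A: "quad_poly {..<n} A (\<lambda>_. 0) 0 x = - (\<Sum>i<n. \<Sum>j<n. x i * P i j * x j) / 2" for x
    by (simp add: quad_poly_def A_def sum_negf sum_divide_distrib mult_ac)
  have expand: "(\<Sum>i<n. \<Sum>j<n. (x i - mu i) * P i j * (x j - mu j)) =
      (\<Sum>i<n. \<Sum>j<n. x i * P i j * x j) - 2 * (\<Sum>i<n. b i * x i) + (\<Sum>i<n. \<Sum>j<n. mu i * P i j * mu j)"
    for x
    unfolding b_def by (rule sum_sum_diff_symmetric[OF sym])
  have "- (1/2) * (\<Sum>i<n. \<Sum>j<n. (x i - mu i) * P i j * (x j - mu j)) = quad_poly {..<n} A b c x - ln c0"
    for x
  proof -
    have "quad_poly {..<n} A b c x = quad_poly {..<n} A (\<lambda>_. 0) 0 x + (\<Sum>i<n. b i * x i) + c"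
      by (simp add: quad_poly_def)
    then show ?thesis
      using expand[of x] quad_A[of x] unfolding c_def by linarith
  qed
  then have "f = (\<lambda>x. exp (quad_poly {..<n} A b c x))"
    using c0 by (simp add: f exp_diff)
  moreover have "neg_definite_on {..<n} A"
    using sym pd quad_A by (auto simp: neg_definite_on_def A_def)
  ultimately have "gaussian_density n f A b c"
    using int by unfold_locales
  then show ?thesis by blast
qed

theorem proposition1:
  fixes n1 n2 :: nat and f :: "(nat \<Rightarrow> real) \<Rightarrow> real" and g1 g2 :: "nat \<Rightarrow> nat set"
  assumes "is_mvn_density (n1 + n2) f"
    and "\<forall>i < n1 + n2. g1 i \<subseteq> {..<i}"
    and "\<forall>i < n1 + n2. g2 i \<subseteq> {..<i}"
  shows "((\<forall>i < n1 + n2. g1 i \<subseteq> g2 i) \<longrightarrow>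
            KL (n1 + n2) f (vecchia (n1 + n2) f g1) \<ge> KL (n1 + n2) f (vecchia (n1 + n2) f g2))
       \<and> ((\<forall>i \<in> {n1..<n1 + n2}. g1 i \<subseteq> g2 i) \<longrightarrow>
            CKL n1 (n1 + n2) f (vecchia (n1 + n2) f g1) \<ge> CKL n1 (n1 + n2) f (vecchia (n1 + n2) f g2))"
proof -
  obtain A b c where "gaussian_density (n1 + n2) f A b c"
    using is_mvn_density_gaussian_density[OF assms(1)] by blast
  then interpret gaussian_density "n1 + n2" f A b c .
  show ?thesis
  proof (intro conjI impI)
    assume "\<forall>i < n1 + n2. g1 i \<subseteq> g2 i"
    then have "(\<Sum>i<n1 + n2. \<integral>x. f x * ln (cond_dens (n1 + n2) f (g1 i) i x) \<partial>leb {..<n1 + n2}) \<le>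
        (\<Sum>i<n1 + n2. \<integral>x. f x * ln (cond_dens (n1 + n2) f (g2 i) i x) \<partial>leb {..<n1 + n2})"
      using assms(3) by (intro sum_integral_f_ln_cond_dens_mono) auto
    then show "KL (n1 + n2) f (vecchia (n1 + n2) f g1) \<ge> KL (n1 + n2) f (vecchia (n1 + n2) f g2)"
      by (simp add: KL_vecchia assms(2,3))
  next
    assume "\<forall>i \<in> {n1..<n1 + n2}. g1 i \<subseteq> g2 i"
    then have "(\<Sum>i\<in>{n1..<n1 + n2}. \<integral>x. f x * ln (cond_dens (n1 + n2) f (g1 i) i x) \<partial>leb {..<n1 + n2}) \<le>
        (\<Sum>i\<in>{n1..<n1 + n2}. \<integral>x. f x * ln (cond_dens (n1 + n2) f (g2 i) i x) \<partial>leb {..<n1 + n2})"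
      using assms(3) by (intro sum_integral_f_ln_cond_dens_mono) auto
    then show "CKL n1 (n1 + n2) f (vecchia (n1 + n2) f g1) \<ge> CKL n1 (n1 + n2) f (vecchia (n1 + n2) f g2)"
      by (simp add: CKL_vecchia assms(2,3))
  qed
qed

end
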